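(* Fix a base $B>1$, an integer $m\ge1$, and real numbers $a<b\le0$. Let $P_i^{(j)}$, $1\le i\le m$, $j\ge1$, be independent identically distributed random variables such that $\log_B P_i^{(j)}$ is uniformly distributed on $(a,b)$. Then the maximum side lengths $$\mathfrak{m}_1^{(n)}:=\max_{1\le i\le m}P_i^{(1)}P_i^{(2)}\cdots P_i^{(n)}$$ converge to strong Benford behavior in base $B$ as $n\to\infty$.
   Context: Significand: for $x>0$, $S_B(x)$ is the unique number in $[1,B)$ with $\log_B x-\log_B S_B(x)\in\mathbb{Z}$. A sequence of positive random variables $X^{(n)}$ converges to strong Benford behavior in base $B$ if $\mathbb{P}(S_B(X^{(n)})\le D)\to\log_B D$ for every $D\in[1,B]$. *)

theory Defs
  imports "HOL-Probability.Probability"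
begin

definition significand :: "real \<Rightarrow> real \<Rightarrow> real" where
  "significand B x = (THE s. 1 \<le> s \<and> s < B \<and> log B x - log B s \<in> \<int>)"

definition strong_benford :: "'a measure \<Rightarrow> real \<Rightarrow> (nat \<Rightarrow> 'a \<Rightarrow> real) \<Rightarrow> bool" where
  "strong_benford M B X \<longleftrightarrow>
     (\<forall>D\<in>{1..B}. (\<lambda>n. measure M {x \<in> space M. significand B (X n x) \<le> D}) \<longlonglongrightarrow> log B D)"

end

theory Submission
  imports Defs
begin

text \<open>Taking logarithms in base B, the significand of the maximum is at most D iff the fractional
  part of G_n = max_i S_i is at most log_B D, where S_1, ..., S_m are independent random walks with
  uniform steps on (a, b). The law of each S_i becomes almost invariant under translations by
  t \<in> [0, 1] in total variation: its n-fold convolution power dominates a small multiple of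
  Lebesgue measure on a long interval, and every further convolution with such a measure contracts
  the translation defect. Translating the walks one at a time shows that the law of G_n is almost
  translation invariant as well, and averaging over t \<in> [0, 1] turns this into
  P(frac G_n \<le> \<delta>) \<rightarrow> \<delta>.\<close>

section \<open>Convolution powers\<close>

lemma prob_space_convolution:
  fixes M N :: "'a::ordered_euclidean_space measure"
  assumes "prob_space M" "prob_space N" "sets M = sets borel" "sets N = sets borel"
  shows "prob_space (M \<star> N)"
proof -
  interpret M: prob_space M by fact
  interpret N: prob_space N by fact
  interpret pair_prob_space M N ..
  have "(\<lambda>(x, y). x + y :: 'a) \<in> borel_measurable (borel \<Otimes>\<^sub>M borel)"
    by measurable
  then have "(\<lambda>(x, y). x + y :: 'a) \<in> borel_measurable (M \<Otimes>\<^sub>M N)"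
    unfolding measurable_cong_sets[OF sets_pair_measure_cong[OF assms(3,4)] refl] .
  then show ?thesis
    unfolding convolution_def by (rule prob_space_distr)
qed

lemma measurable_emeasure_translate:
  fixes \<mu> :: "'a::ordered_euclidean_space measure"
  assumes "sigma_finite_measure \<mu>" "sets \<mu> = sets borel" "A \<in> sets borel"
  shows "(\<lambda>x. emeasure \<mu> {a. a + x \<in> A}) \<in> borel_measurable borel"
proof -
  interpret sigma_finite_measure \<mu> by fact
  have "(\<lambda>p. snd p + fst p) \<in> borel_measurable (borel \<Otimes>\<^sub>M (borel :: 'a measure))"
    by (intro borel_measurable_add measurable_fst'' measurable_snd'') simp_all
  from measurable_sets[OF this assms(3)]
  have "{p. snd p + fst p \<in> A} \<in> sets (borel \<Otimes>\<^sub>M (borel :: 'a measure))"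
    by (simp add: space_pair_measure vimage_def)
  then have "{p. snd p + fst p \<in> A} \<in> sets (borel \<Otimes>\<^sub>M \<mu>)"
    by (simp add: sets_pair_measure_cong[OF refl assms(2)])
  from measurable_emeasure_Pair[OF this] show ?thesis
    by (simp add: vimage_def)
qed

lemma measurable_measure_translate:
  fixes \<mu> :: "'a::ordered_euclidean_space measure"
  assumes "finite_measure \<mu>" "sets \<mu> = sets borel" "A \<in> sets borel"
  shows "(\<lambda>x. measure \<mu> {a. a + x \<in> A}) \<in> borel_measurable borel"
  unfolding measure_def
  using measurable_emeasure_translate[OF finite_measure.sigma_finite_measure[OF assms(1)] assms(2,3)]
  by measurable

lemma measure_convolution:
  fixes \<mu> \<nu> :: "'a::ordered_euclidean_space measure"
  assumes "prob_space \<nu>" "sets \<nu> = sets borel" "prob_space \<mu>" "sets \<mu> = sets borel" "A \<in> sets borel"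
  shows "measure (\<nu> \<star> \<mu>) A = (\<integral>x. measure \<mu> {a. a + x \<in> A} \<partial>\<nu>)"
proof -
  interpret N: prob_space \<nu> by fact
  interpret M: prob_space \<mu> by fact
  have "(\<lambda>x. measure \<mu> {a. a + x \<in> A}) \<in> borel_measurable \<nu>"
    using measurable_measure_translate[OF M.finite_measure_axioms assms(4,5)]
    by (simp add: measurable_cong_sets[OF assms(2) refl])
  then have int: "integrable \<nu> (\<lambda>x. measure \<mu> {a. a + x \<in> A})"
    by (intro N.integrable_const_bound[where B=1]) auto
  have "emeasure (\<nu> \<star> \<mu>) A = (\<integral>\<^sup>+x. ennreal (measure \<mu> {a. a + x \<in> A}) \<partial>\<nu>)"
    using assms by (subst convolution_emeasure)
      (auto simp: N.finite_measure_axioms M.finite_measure_axioms M.emeasure_eq_measure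
        sets_eq_imp_space_eq[OF assms(2)] sets_eq_imp_space_eq[OF assms(4)])
  also have "\<dots> = ennreal (\<integral>x. measure \<mu> {a. a + x \<in> A} \<partial>\<nu>)"
    by (rule nn_integral_eq_integral[OF int]) auto
  finally show ?thesis
    by (simp add: measure_def)
qed

lemma convolution_return_zero:
  fixes N :: "'a::ordered_euclidean_space measure"
  assumes "finite_measure N" "sets N = sets borel"
  shows "return borel 0 \<star> N = N"
proof (rule measure_eqI)
  interpret N: finite_measure N by fact
  interpret R: prob_space "return borel (0::'a)" by (rule prob_space_return) simp
  show "sets (return borel 0 \<star> N) = sets N"
    using assms by simp
  fix A assume "A \<in> sets (return borel 0 \<star> N)"
  then have A: "A \<in> sets borel" by simp
  have "emeasure (return borel 0 \<star> N) A = (\<integral>\<^sup>+x. emeasure N {a. a + x \<in> A} \<partial>return borel 0)"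
    by (rule convolution_emeasure)
      (auto simp: assms A R.finite_measure_axioms N.finite_measure_axioms sets_eq_imp_space_eq[OF assms(2)])
  also have "\<dots> = emeasure N A"
    using measurable_emeasure_translate[OF N.sigma_finite_measure assms(2) A]
    by (subst nn_integral_return) auto
  finally show "emeasure (return borel 0 \<star> N) A = emeasure N A" .
qed

lemma convolution_mono_right:
  fixes M N N' :: "'a::ordered_euclidean_space measure"
  assumes "finite_measure M" "finite_measure N" "finite_measure N'"
    and "sets M = sets borel" "sets N = sets borel" "sets N' = sets borel" and "N \<le> N'"
  shows "(M \<star> N) \<le> (M \<star> N')"
proof (subst le_measure, goal_cases sets emeasure)
  case emeasure
  show ?case
  proof
    fix A assume "A \<in> sets (M \<star> N)"
    then have A: "A \<in> sets borel" by simp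
    have shifted: "{a. a + x \<in> A} \<in> sets N" for x
      using measurable_sets[OF _ A, of "\<lambda>a. a + x" borel] assms(5) by (simp add: vimage_def)
    have "emeasure (M \<star> N) A = (\<integral>\<^sup>+x. emeasure N {a. a + x \<in> A} \<partial>M)"
      using assms A by (intro convolution_emeasure) (auto simp: sets_eq_imp_space_eq)
    also have "\<dots> \<le> (\<integral>\<^sup>+x. emeasure N' {a. a + x \<in> A} \<partial>M)"
      using assms(5-7) shifted by (intro nn_integral_mono le_measureD3) auto
    also have "\<dots> = emeasure (M \<star> N') A"
      using assms A by (intro convolution_emeasure[symmetric]) (auto simp: sets_eq_imp_space_eq)
    finally show "emeasure (M \<star> N) A \<le> emeasure (M \<star> N') A" .
  qed
qed simp

fun conv_power :: "'a::ordered_euclidean_space measure \<Rightarrow> nat \<Rightarrow> 'a measure" where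
  "conv_power U 0 = return borel 0"
| "conv_power U (Suc n) = (U \<star> conv_power U n)"

lemma sets_conv_power [simp]: "sets (conv_power U n) = sets borel"
  by (cases n) simp_all

lemma prob_space_conv_power:
  assumes "prob_space U" "sets U = sets borel"
  shows "prob_space (conv_power U n)"
  by (induction n) (simp_all add: prob_space_return prob_space_convolution assms)

lemma conv_power_add:
  assumes "prob_space U" "sets U = sets borel"
  shows "conv_power U (p + q) = (conv_power U p \<star> conv_power U q)"
proof (induction p)
  case 0
  show ?case
    using prob_space.finite_measure[OF prob_space_conv_power[OF assms]]
    by (simp add: convolution_return_zero)
next
  case (Suc p)
  have fin: "finite_measure U" "finite_measure (conv_power U n)" for n
    using prob_space.finite_measure assms(1) prob_space_conv_power[OF assms] by blast+
  have "conv_power U (Suc p + q) = (U \<star> (conv_power U p \<star> conv_power U q))"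
    using Suc by simp
  also have "\<dots> = ((U \<star> conv_power U p) \<star> conv_power U q)"
    by (rule convolution_associative) (simp_all add: fin assms(2))
  finally show ?case by simp
qed

lemma conv_power_1:
  assumes "prob_space U" "sets U = sets borel"
  shows "conv_power U 1 = U"
proof -
  have fin: "finite_measure U" "finite_measure (return borel (0::'a))"
    using assms(1) prob_space_return[of "0::'a" borel] prob_space.finite_measure by auto
  have "conv_power U 1 = (U \<star> return borel 0)"
    by simp
  also have "\<dots> = (return borel 0 \<star> U)"
    by (rule convolution_commutative) (simp_all add: fin assms(2))
  also have "\<dots> = U"
    by (rule convolution_return_zero[OF fin(1) assms(2)])
  finally show ?thesis .
qed

section \<open>Translation defect and Lebesgue minorants\<close>

definition shift_tv_le :: "real measure \<Rightarrow> real \<Rightarrow> real \<Rightarrow> bool" where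
  "shift_tv_le \<mu> t e \<longleftrightarrow> (\<forall>A\<in>sets borel. \<bar>measure \<mu> ((\<lambda>x. x + t) -` A) - measure \<mu> A\<bar> \<le> e)"

definition lebesgue_minorant :: "real measure \<Rightarrow> real \<Rightarrow> real \<Rightarrow> real \<Rightarrow> bool" where
  "lebesgue_minorant \<nu> h u l \<longleftrightarrow> density lborel (\<lambda>x. ennreal h * indicator {u<..<u+l} x) \<le> \<nu>"

lemma lebesgue_minorant_zero:
  assumes "sets \<nu> = sets borel"
  shows "lebesgue_minorant \<nu> 0 u l"
  unfolding lebesgue_minorant_def using assms by (subst le_measure) (auto simp: emeasure_density)

lemma shift_tv_le_nonneg: "shift_tv_le \<mu> t e \<Longrightarrow> 0 \<le> e"
  unfolding shift_tv_le_def by (drule bspec[of _ _ "{}"]) auto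

lemma shift_tv_le_mono: "shift_tv_le \<mu> t e \<Longrightarrow> e \<le> e' \<Longrightarrow> shift_tv_le \<mu> t e'"
  unfolding shift_tv_le_def by force

lemma shift_tv_le_one:
  assumes "prob_space \<mu>" "1 \<le> e"
  shows "shift_tv_le \<mu> t e"
proof -
  interpret prob_space \<mu> by fact
  have "\<bar>prob ((\<lambda>x. x + t) -` A) - prob A\<bar> \<le> 1" for A
    using prob_le_1[of A] prob_le_1[of "(\<lambda>x. x + t) -` A"] measure_nonneg[of \<mu> A]
      measure_nonneg[of \<mu> "(\<lambda>x. x + t) -` A"] by linarith
  then show ?thesis
    using assms(2) unfolding shift_tv_le_def by (meson order_trans)
qed

lemma integrable_bounded_support:
  fixes g :: "real \<Rightarrow> real"
  assumes "g \<in> borel_measurable borel" "\<And>x. \<bar>g x\<bar> \<le> C * indicator {u..v} x"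
  shows "integrable lborel g"
proof (rule Bochner_Integration.integrable_bound[where f="\<lambda>x. C * indicator {u..v} x"])
  show "integrable lborel (\<lambda>x. C * indicator {u..v} x :: real)"
    by (cases "u \<le> v") (auto intro!: integrable_real_indicator simp: emeasure_lborel_Icc)
  show "AE x in lborel. norm (g x) \<le> norm (C * indicator {u..v} x :: real)"
    using assms(2) by (auto intro!: AE_I2 order.trans[OF _ abs_ge_self])
qed (use assms(1) in simp)

lemma integral_ge_lebesgue_minorant:
  fixes \<nu> :: "real measure" and \<phi> :: "real \<Rightarrow> real"
  assumes \<nu>: "prob_space \<nu>" "sets \<nu> = sets borel" and minor: "lebesgue_minorant \<nu> h u l" "0 \<le> h"
    and \<phi>: "\<phi> \<in> borel_measurable borel" "\<And>x. 0 \<le> \<phi> x" "\<And>x. \<phi> x \<le> C"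
  shows "h * (\<integral>x. indicator {u<..<u+l} x * \<phi> x \<partial>lborel) \<le> (\<integral>x. \<phi> x \<partial>\<nu>)"
proof -
  interpret prob_space \<nu> by fact
  have C: "0 \<le> C" using \<phi>(2,3) order.trans by blast
  have int_\<nu>: "integrable \<nu> \<phi>"
    by (rule integrable_const_bound[where B=C]) (use \<phi> measurable_cong_sets[OF \<nu>(2) refl] in auto)
  have int_lborel: "integrable lborel (\<lambda>x. h * (indicator {u<..<u+l} x * \<phi> x))"
    by (rule integrable_bounded_support[where C="h * C" and u=u and v="u+l"])
      (use minor(2) \<phi> C in \<open>auto simp: indicator_def abs_mult intro: mult_left_mono\<close>)
  have "ennreal (\<integral>x. h * (indicator {u<..<u+l} x * \<phi> x) \<partial>lborel)
      = (\<integral>\<^sup>+x. ennreal (h * (indicator {u<..<u+l} x * \<phi> x)) \<partial>lborel)"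
    by (rule nn_integral_eq_integral[OF int_lborel, symmetric]) (use minor(2) \<phi>(2) in auto)
  also have "\<dots> = (\<integral>\<^sup>+x. ennreal (\<phi> x) \<partial>density lborel (\<lambda>x. ennreal h * indicator {u<..<u+l} x))"
    using minor(2) \<phi>(1,2)
    by (subst nn_integral_density) (auto intro!: nn_integral_cong simp: indicator_def ennreal_mult)
  also have "\<dots> \<le> (\<integral>\<^sup>+x. ennreal (\<phi> x) \<partial>\<nu>)"
    by (rule nn_integral_mono_measure) (use \<nu>(2) minor(1) in \<open>auto simp: lebesgue_minorant_def\<close>)
  also have "\<dots> = ennreal (\<integral>x. \<phi> x \<partial>\<nu>)"
    by (rule nn_integral_eq_integral[OF int_\<nu>]) (use \<phi>(2) in auto)
  finally show ?thesis
    by (subst (asm) ennreal_le_iff) (auto intro!: integral_nonneg_AE simp: \<phi>(2))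
qed

lemma abs_integral_le_lebesgue_minorant:
  fixes \<nu> :: "real measure" and g :: "real \<Rightarrow> real"
  assumes \<nu>: "prob_space \<nu>" "sets \<nu> = sets borel"
    and minor: "lebesgue_minorant \<nu> h u l" "0 \<le> h" "0 \<le> l"
    and g: "g \<in> borel_measurable borel" "\<And>x. \<bar>g x\<bar> \<le> e"
  shows "\<bar>\<integral>x. g x \<partial>\<nu>\<bar> \<le> (1 - h * l) * e + h * \<bar>\<integral>x. indicator {u<..<u+l} x * g x \<partial>lborel\<bar>"
proof -
  interpret prob_space \<nu> by fact
  define G where "G = (\<integral>x. indicator {u<..<u+l} x * g x \<partial>lborel)"
  have g_bounds: "- e \<le> g x" "g x \<le> e" for x
    using g(2)[of x] by auto
  have e: "0 \<le> e"
    using g_bounds[of 0] by linarith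
  have g_shifted: "0 \<le> e - g x" "e - g x \<le> 2 * e" "0 \<le> e + g x" "e + g x \<le> 2 * e" for x
    using g_bounds[of x] by linarith+
  have int_\<nu>: "integrable \<nu> g"
    by (rule integrable_const_bound[where B=e]) (use g measurable_cong_sets[OF \<nu>(2) refl] in auto)
  have int_lborel: "integrable lborel (\<lambda>x. indicator {u<..<u+l} x * g x)"
    by (rule integrable_bounded_support[where C=e and u=u and v="u+l"])
      (use g e in \<open>auto simp: indicator_def\<close>)
  have lower: "h * (l * e - G) \<le> e - (\<integral>x. g x \<partial>\<nu>)"
  proof -
    have "h * (\<integral>x. indicator {u<..<u+l} x * (e - g x) \<partial>lborel) \<le> (\<integral>x. e - g x \<partial>\<nu>)"
      by (rule integral_ge_lebesgue_minorant[OF \<nu> minor(1,2), where C="2 * e"])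
        (use g(1) g_shifted in auto)
    moreover have "(\<integral>x. indicator {u<..<u+l} x * (e - g x) \<partial>lborel) = l * e - G"
      using int_lborel minor(3) by (simp add: right_diff_distrib G_def)
    ultimately show ?thesis
      using int_\<nu> by (simp add: prob_space)
  qed
  have upper: "h * (l * e + G) \<le> e + (\<integral>x. g x \<partial>\<nu>)"
  proof -
    have "h * (\<integral>x. indicator {u<..<u+l} x * (e + g x) \<partial>lborel) \<le> (\<integral>x. e + g x \<partial>\<nu>)"
      by (rule integral_ge_lebesgue_minorant[OF \<nu> minor(1,2), where C="2 * e"])
        (use g(1) g_shifted in auto)
    moreover have "(\<integral>x. indicator {u<..<u+l} x * (e + g x) \<partial>lborel) = l * e + G"
      using int_lborel minor(3) by (simp add: distrib_left G_def)
    ultimately show ?thesis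
      using int_\<nu> by (simp add: prob_space)
  qed
  have "h * G \<le> h * \<bar>G\<bar>" "h * - G \<le> h * \<bar>G\<bar>"
    using minor(2) by (intro mult_left_mono; simp)+
  with lower upper show ?thesis
    unfolding G_def[symmetric] by (simp add: abs_le_iff algebra_simps)
qed

text \<open>Only the mass near the two ends of the interval moves when a function bounded by 1
  is translated by t.\<close>

lemma abs_integral_indicator_translate_diff_le:
  fixes f :: "real \<Rightarrow> real"
  assumes f: "f \<in> borel_measurable borel" "\<And>x. 0 \<le> f x" "\<And>x. f x \<le> 1" and "0 \<le> t" "0 \<le> l"
  shows "\<bar>\<integral>x. indicator {u<..<u+l} x * (f (x + t) - f x) \<partial>lborel\<bar> \<le> t"
proof -
  let ?I = "{u<..<u+l}"
  let ?k = "\<lambda>x. (indicator ?I (x - t) - indicator ?I x) * f x :: real"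
  have int1: "integrable lborel (\<lambda>x. indicator ?I x * f x)"
    by (rule integrable_bounded_support[where C=1 and u=u and v="u+l"]) (use f in \<open>auto simp: indicator_def\<close>)
  have int2: "integrable lborel (\<lambda>x. indicator ?I x * f (x + t))"
    by (rule integrable_bounded_support[where C=1 and u=u and v="u+l"]) (use f in \<open>auto simp: indicator_def\<close>)
  have int3: "integrable lborel (\<lambda>x. indicator ?I (x - t) * f x)"
    by (rule integrable_bounded_support[where C=1 and u="u+t" and v="u+l+t"]) (use f in \<open>auto simp: indicator_def\<close>)
  note int = int1 int2 int3
  have "(\<integral>x. indicator ?I x * f (x + t) \<partial>lborel) = (\<integral>x. indicator ?I (x - t) * f x \<partial>lborel)"
    by (subst lborel_integral_real_affine[where c=1 and t=t]) (simp_all add: add.commute)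
  then have eq: "(\<integral>x. indicator ?I x * (f (x + t) - f x) \<partial>lborel) = (\<integral>x. ?k x \<partial>lborel)"
    using int by (simp add: right_diff_distrib left_diff_distrib)
  have int_k: "integrable lborel ?k"
    using int by (simp add: left_diff_distrib)
  have Icc_int: "integrable lborel (indicator {c..d} :: real \<Rightarrow> real)" for c d
    by (cases "c \<le> d") (auto intro!: integrable_real_indicator simp: emeasure_lborel_Icc)
  have Icc_integral: "(\<integral>x. indicator {c..c + t} x \<partial>lborel) = t" for c
    using \<open>0 \<le> t\<close> by simp
  have "(\<integral>x. ?k x \<partial>lborel) \<le> (\<integral>x. indicator {u+l..u+l+t} x \<partial>lborel)"
    by (rule integral_mono[OF int_k Icc_int]) (use f \<open>0 \<le> t\<close> in \<open>auto simp: indicator_def\<close>)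
  moreover have "(\<integral>x. - indicator {u..u+t} x \<partial>lborel) \<le> (\<integral>x. ?k x \<partial>lborel)"
    by (rule integral_mono[OF integrable_minus[OF Icc_int] int_k])
      (use f \<open>0 \<le> t\<close> in \<open>auto simp: indicator_def\<close>)
  ultimately show ?thesis
    unfolding eq using Icc_integral[of u] Icc_integral[of "u + l"] by (simp add: abs_le_iff)
qed

text \<open>The part h \<cdot> Lebesgue on (u, u + l) of \<nu> smears \<mu> out almost translation invariantly, up
  to the end effect h t; only the remaining mass 1 - h l of \<nu> carries the defect e of \<mu>.\<close>

lemma shift_tv_le_convolution:
  fixes \<mu> \<nu> :: "real measure"
  assumes \<nu>: "prob_space \<nu>" "sets \<nu> = sets borel" and \<mu>: "prob_space \<mu>" "sets \<mu> = sets borel"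
    and minor: "lebesgue_minorant \<nu> h u l" "0 \<le> h" "0 \<le> l"
    and "0 \<le> t" and tv: "shift_tv_le \<mu> t e"
  shows "shift_tv_le (\<nu> \<star> \<mu>) t ((1 - h * l) * e + h * t)"
  unfolding shift_tv_le_def
proof
  fix A :: "real set" assume A: "A \<in> sets borel"
  interpret \<nu>: prob_space \<nu> by fact
  interpret \<mu>: prob_space \<mu> by fact
  define f where "f x = measure \<mu> {a. a + x \<in> A}" for x
  have f: "f \<in> borel_measurable borel" "\<And>x. 0 \<le> f x" "\<And>x. f x \<le> 1"
    unfolding f_def using measurable_measure_translate[OF \<mu>.finite_measure_axioms \<mu>(2) A] by auto
  have f_shift: "(\<lambda>x. f (x + t)) \<in> borel_measurable borel"
    using f(1) by measurable
  have preimage: "(\<lambda>x. x + t) -` {a. a + y \<in> A} = {a. a + (y + t) \<in> A}" for y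
    by (auto simp: algebra_simps)
  have "{a. a + y \<in> A} \<in> sets borel" for y
    using measurable_sets[OF _ A, of "\<lambda>a. a + y" borel] by (simp add: vimage_def)
  then have g: "\<bar>f (x + t) - f x\<bar> \<le> e" for x
    using tv unfolding shift_tv_le_def f_def preimage[symmetric] by blast
  have "f \<in> borel_measurable \<nu>" "(\<lambda>x. f (x + t)) \<in> borel_measurable \<nu>"
    using f(1) f_shift by (simp_all add: measurable_cong_sets[OF \<nu>(2) refl])
  then have int: "integrable \<nu> f" "integrable \<nu> (\<lambda>x. f (x + t))"
    using f(2,3) by (auto intro!: \<nu>.integrable_const_bound[where B=1])
  have preimage_A: "(\<lambda>x. x + t) -` A \<in> sets borel"
    using measurable_sets[OF _ A, of "\<lambda>x. x + t" borel] by simp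
  have "measure (\<nu> \<star> \<mu>) ((\<lambda>x. x + t) -` A) - measure (\<nu> \<star> \<mu>) A = (\<integral>x. f (x + t) - f x \<partial>\<nu>)"
    using measure_convolution[OF \<nu> \<mu> preimage_A] measure_convolution[OF \<nu> \<mu> A] int
    unfolding f_def by (simp add: add.assoc)
  also have "\<bar>\<dots>\<bar> \<le> (1 - h * l) * e + h * \<bar>\<integral>x. indicator {u<..<u+l} x * (f (x + t) - f x) \<partial>lborel\<bar>"
    by (rule abs_integral_le_lebesgue_minorant[OF \<nu> minor]) (use f(1) f_shift g in auto)
  also have "\<dots> \<le> (1 - h * l) * e + h * t"
    using abs_integral_indicator_translate_diff_le[OF f \<open>0 \<le> t\<close> minor(3)] minor(2)
    by (simp add: mult_left_mono)
  finally show "\<bar>measure (\<nu> \<star> \<mu>) ((\<lambda>x. x + t) -` A) - measure (\<nu> \<star> \<mu>) A\<bar> \<le> (1 - h * l) * e + h * t" .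
qed

lemma shift_tv_le_convolution_left:
  fixes \<mu> \<nu> :: "real measure"
  assumes "prob_space \<nu>" "sets \<nu> = sets borel" "prob_space \<mu>" "sets \<mu> = sets borel"
    and "0 \<le> t" "shift_tv_le \<mu> t e"
  shows "shift_tv_le (\<nu> \<star> \<mu>) t e"
  using shift_tv_le_convolution[OF assms(1-4) lebesgue_minorant_zero[OF assms(2)], of 0] assms(5,6)
  by simp

section \<open>Convolution powers of a uniform law\<close>

lemma uniform_measure_Ioo_eq_density:
  fixes a b :: real
  assumes "a < b"
  shows "uniform_measure lborel {a<..<b} = density lborel (\<lambda>x. ennreal (1 / (b - a)) * indicator {a<..<b} x)"
proof -
  have "1 / ennreal (b - a) = ennreal (1 / (b - a))"
    using divide_ennreal[of 1 "b - a"] assms by simp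
  then show ?thesis
    unfolding uniform_measure_def using assms by (intro density_cong) (auto simp: indicator_def)
qed

lemma prob_space_uniform_Ioo:
  fixes a b :: real
  assumes "a < b"
  shows "prob_space (uniform_measure lborel {a<..<b})"
  using assms by (intro prob_space_uniform_measure) auto

lemma lebesgue_minorant_uniform:
  fixes a b :: real
  assumes "a < b"
  shows "lebesgue_minorant (uniform_measure lborel {a<..<b}) (1 / (b - a)) a (b - a)"
  unfolding lebesgue_minorant_def uniform_measure_Ioo_eq_density[OF assms] by simp

lemma finite_measure_density_indicator_Ioo:
  fixes h u v :: real
  shows "finite_measure (density lborel (\<lambda>x. ennreal h * indicator {u<..<v} x))"
proof -
  have "emeasure lborel {u<..<v} \<le> emeasure lborel {u..v}"
    by (intro emeasure_mono) auto
  then have "emeasure lborel {u<..<v} < \<top>"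
    by (simp add: emeasure_lborel_Icc_eq le_less_trans)
  then show ?thesis
    by (intro finite_measureI) (simp add: emeasure_density nn_integral_cmult_indicator ennreal_mult_eq_top_iff)
qed

text \<open>For s in the middle part of the window, the translate s - (a, b) overlaps (u, u + l) in an
  interval of length at least (b - a) / 4.\<close>

lemma nn_integral_uniform_window_ge:
  fixes a b h u l s :: real
  assumes "a < b" "0 \<le> h" "b - a \<le> l"
    and "s \<in> {u + a + (b - a) / 4 <..< u + a + (b - a) / 4 + (l + (b - a) / 2)}"
  shows "ennreal (h / 4)
    \<le> (\<integral>\<^sup>+y. ennreal (1 / (b - a)) * indicator {a<..<b} (s - y) * (ennreal h * indicator {u<..<u+l} y) \<partial>lborel)"
proof -
  let ?V = "{max (s - b) u<..<min (s - a) (u + l)}"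
  have length: "(b - a) / 4 \<le> min (s - a) (u + l) - max (s - b) u"
    using assms by (simp add: min_def max_def field_simps)
  then have "max (s - b) u \<le> min (s - a) (u + l)"
    using assms(1) by argo
  then have "ennreal ((b - a) / 4) \<le> emeasure lborel ?V"
    using length by (simp add: ennreal_leI)
  then have "ennreal (h / 4) \<le> ennreal (1 / (b - a)) * ennreal h * emeasure lborel ?V"
    using assms(1,2) mult_left_mono[of "ennreal ((b - a) / 4)" _ "ennreal (1 / (b - a)) * ennreal h"]
    by (simp add: ennreal_mult[symmetric])
  also have "\<dots> = (\<integral>\<^sup>+y. ennreal (1 / (b - a)) * ennreal h * indicator ?V y \<partial>lborel)"
    by (rule nn_integral_cmult_indicator[symmetric]) simp
  also have "\<dots> = (\<integral>\<^sup>+y. ennreal (1 / (b - a)) * indicator {a<..<b} (s - y) * (ennreal h * indicator {u<..<u+l} y) \<partial>lborel)"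
    by (intro nn_integral_cong) (auto simp: indicator_def)
  finally show ?thesis .
qed

lemma lebesgue_minorant_uniform_convolution:
  fixes a b h u l :: real and X :: "real measure"
  assumes "a < b" and X: "prob_space X" "sets X = sets borel"
    and minor: "lebesgue_minorant X h u l" "0 \<le> h" and "b - a \<le> l"
  shows "lebesgue_minorant (uniform_measure lborel {a<..<b} \<star> X) (h / 4)
           (u + a + (b - a) / 4) (l + (b - a) / 2)"
proof -
  let ?J = "{u + a + (b - a) / 4 <..< u + a + (b - a) / 4 + (l + (b - a) / 2)}"
  let ?f = "\<lambda>x. ennreal (1 / (b - a)) * indicator {a<..<b} x"
  let ?g = "\<lambda>x. ennreal h * indicator {u<..<u+l} x"
  have fin: "finite_measure (density lborel ?f)" "finite_measure (density lborel ?g)"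
    using prob_space_uniform_Ioo[OF \<open>a < b\<close>] finite_measure_density_indicator_Ioo[of h u "u + l"]
    by (auto simp: uniform_measure_Ioo_eq_density[OF \<open>a < b\<close>] prob_space.finite_measure)
  have "density lborel (\<lambda>s. ennreal (h / 4) * indicator ?J s)
      \<le> density lborel (\<lambda>s. \<integral>\<^sup>+y. ?f (s - y) * ?g y \<partial>lborel)"
  proof (subst le_measure, goal_cases sets emeasure)
    case emeasure
    have "ennreal (h / 4) * indicator ?J s \<le> (\<integral>\<^sup>+y. ?f (s - y) * ?g y \<partial>lborel)" for s
      using nn_integral_uniform_window_ge[OF \<open>a < b\<close> minor(2) \<open>b - a \<le> l\<close>, of s u]
      by (cases "s \<in> ?J") (simp_all add: mult.assoc)
    then show ?case
      by (auto simp: emeasure_density intro!: nn_integral_mono mult_right_mono)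
  qed simp
  also have "\<dots> = (density lborel ?f \<star> density lborel ?g)"
    by (rule convolution_density[symmetric]) (simp_all add: fin)
  also have "\<dots> \<le> (uniform_measure lborel {a<..<b} \<star> X)"
    unfolding uniform_measure_Ioo_eq_density[OF \<open>a < b\<close>]
    using fin X minor(1) by (intro convolution_mono_right) (auto simp: lebesgue_minorant_def prob_space.finite_measure)
  finally show ?thesis
    unfolding lebesgue_minorant_def by (simp add: algebra_simps)
qed

lemma lebesgue_minorant_conv_power_uniform:
  fixes a b :: real
  assumes "a < b"
  shows "\<exists>u. lebesgue_minorant (conv_power (uniform_measure lborel {a<..<b}) (Suc k))
               (1 / (b - a) / 4 ^ k) u ((b - a) * (1 + k / 2))"
proof (induction k)
  case 0
  show ?case
    using lebesgue_minorant_uniform[OF assms] conv_power_1[OF prob_space_uniform_Ioo[OF assms]] by auto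
next
  case (Suc k)
  let ?U = "uniform_measure lborel {a<..<b}"
  obtain u where "lebesgue_minorant (conv_power ?U (Suc k)) (1 / (b - a) / 4 ^ k) u ((b - a) * (1 + k / 2))"
    using Suc.IH by blast
  from lebesgue_minorant_uniform_convolution[OF assms prob_space_conv_power[OF prob_space_uniform_Ioo[OF assms]] sets_conv_power this]
  have "lebesgue_minorant (conv_power ?U (Suc (Suc k))) (1 / (b - a) / 4 ^ k / 4)
          (u + a + (b - a) / 4) ((b - a) * (1 + k / 2) + (b - a) / 2)"
    using assms by simp
  moreover have "(b - a) * (1 + k / 2) + (b - a) / 2 = (b - a) * (1 + Suc k / 2)"
    by (simp add: field_simps)
  moreover have "1 / (b - a) / 4 ^ k / 4 = 1 / (b - a) / 4 ^ Suc k"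
    by simp
  ultimately show ?case
    by metis
qed

lemma shift_tv_le_conv_power_mult:
  assumes U: "prob_space U" "sets U = sets borel"
    and minor: "lebesgue_minorant (conv_power U K) h u l" "0 \<le> h" "0 < l" and "0 \<le> t"
  shows "shift_tv_le (conv_power U (r * K)) t ((1 - h * l) ^ r + t / l)"
proof (induction r)
  case 0
  show ?case
    using minor(3) \<open>0 \<le> t\<close> by (auto intro!: shift_tv_le_one prob_space_return)
next
  case (Suc r)
  have "shift_tv_le (conv_power U K \<star> conv_power U (r * K)) t
          ((1 - h * l) * ((1 - h * l) ^ r + t / l) + h * t)"
    using minor Suc.IH \<open>0 \<le> t\<close> prob_space_conv_power[OF U]
    by (intro shift_tv_le_convolution) auto
  moreover have "conv_power U (Suc r * K) = (conv_power U K \<star> conv_power U (r * K))"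
    using conv_power_add[OF U, of K "r * K"] by simp
  moreover have "(1 - h * l) * ((1 - h * l) ^ r + t / l) + h * t = (1 - h * l) ^ Suc r + t / l"
    using minor(3) by (simp add: field_simps)
  ultimately show ?case
    by simp
qed

lemma long_lebesgue_minorant_conv_power_uniform:
  fixes a b L :: real
  assumes "a < b"
  obtains K h u l where "lebesgue_minorant (conv_power (uniform_measure lborel {a<..<b}) K) h u l"
    "0 < h" "0 < l" "h * l \<le> 1" "L < l"
proof -
  obtain k :: nat where k: "2 * L / (b - a) < k"
    using reals_Archimedean2 by blast
  define h where "h = 1 / (b - a) / 4 ^ k"
  define l where "l = (b - a) * (1 + k / 2)"
  obtain u where "lebesgue_minorant (conv_power (uniform_measure lborel {a<..<b}) (Suc k)) h u l"
    using lebesgue_minorant_conv_power_uniform[OF assms, of k] unfolding h_def l_def by blast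
  moreover have "0 < h" "0 < l"
    using assms by (simp_all add: h_def l_def add_pos_nonneg)
  moreover have "h * l \<le> 1"
  proof -
    have "1 + k / 2 \<le> (4::real) ^ k"
      using Bernoulli_inequality[of "3::real" k] by simp
    then show ?thesis
      using assms by (simp add: h_def l_def)
  qed
  moreover have "L < l"
    using k assms by (simp add: l_def field_simps)
  ultimately show ?thesis
    using that by blast
qed

lemma eventually_shift_tv_le_conv_power_uniform:
  fixes a b e :: real
  assumes "a < b" "0 < e"
  shows "\<forall>\<^sub>F n in sequentially. \<forall>t\<in>{0..1}.
           shift_tv_le (conv_power (uniform_measure lborel {a<..<b}) n) t e"
proof -
  let ?U = "uniform_measure lborel {a<..<b}"
  have U: "prob_space ?U" "sets ?U = sets borel"
    using prob_space_uniform_Ioo[OF assms(1)] by auto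
  obtain K h u l where minor: "lebesgue_minorant (conv_power ?U K) h u l"
    and "0 < h" "0 < l" "h * l \<le> 1" "2 / e < l"
    by (rule long_lebesgue_minorant_conv_power_uniform[OF assms(1)])
  then have "1 / l < e / 2"
    using assms(2) by (simp add: field_simps)
  obtain r where r: "(1 - h * l) ^ r < e / 2"
    using real_arch_pow_inv[of "e / 2" "1 - h * l"] assms(2) \<open>0 < h\<close> \<open>0 < l\<close> by auto
  have "shift_tv_le (conv_power ?U n) t e" if "r * K \<le> n" "t \<in> {0..1}" for n t
  proof -
    have "shift_tv_le (conv_power ?U (r * K)) t ((1 - h * l) ^ r + t / l)"
      using shift_tv_le_conv_power_mult[OF U minor] \<open>0 < h\<close> \<open>0 < l\<close> that(2) by simp
    then have "shift_tv_le (conv_power ?U (n - r * K) \<star> conv_power ?U (r * K)) t ((1 - h * l) ^ r + t / l)"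
      using prob_space_conv_power[OF U] that(2) by (intro shift_tv_le_convolution_left) auto
    moreover have "conv_power ?U n = (conv_power ?U (n - r * K) \<star> conv_power ?U (r * K))"
      using conv_power_add[OF U, of "n - r * K" "r * K"] that(1) by simp
    moreover have "t / l \<le> 1 / l"
      using that(2) \<open>0 < l\<close> by (simp add: divide_right_mono)
    ultimately show ?thesis
      using r \<open>1 / l < e / 2\<close> by (auto elim: shift_tv_le_mono)
  qed
  then show ?thesis
    unfolding eventually_sequentially by blast
qed

section \<open>Maxima of independent random variables\<close>

lemma integrable_measure_Pair:
  assumes "prob_space \<nu>" "prob_space \<rho>" "S \<in> sets (\<nu> \<Otimes>\<^sub>M \<rho>)"
  shows "integrable \<nu> (\<lambda>w. measure \<rho> (Pair w -` S))"
proof -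
  interpret \<nu>: prob_space \<nu> by fact
  interpret \<rho>: prob_space \<rho> by fact
  have "(\<lambda>w. emeasure \<rho> (Pair w -` S)) \<in> borel_measurable \<nu>"
    by (rule \<rho>.measurable_emeasure_Pair[OF assms(3)])
  then have "(\<lambda>w. measure \<rho> (Pair w -` S)) \<in> borel_measurable \<nu>"
    unfolding measure_def by measurable
  then show ?thesis
    by (intro \<nu>.integrable_const_bound[where B=1]) auto
qed

lemma measure_pair_measure_eq_integral:
  assumes "prob_space \<nu>" "prob_space \<rho>" "S \<in> sets (\<nu> \<Otimes>\<^sub>M \<rho>)"
  shows "measure (\<nu> \<Otimes>\<^sub>M \<rho>) S = (\<integral>w. measure \<rho> (Pair w -` S) \<partial>\<nu>)"
proof -
  interpret \<rho>: prob_space \<rho> by fact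
  have "emeasure (\<nu> \<Otimes>\<^sub>M \<rho>) S = (\<integral>\<^sup>+w. ennreal (measure \<rho> (Pair w -` S)) \<partial>\<nu>)"
    by (simp add: \<rho>.emeasure_pair_measure_alt[OF assms(3)] \<rho>.emeasure_eq_measure)
  also have "\<dots> = ennreal (\<integral>w. measure \<rho> (Pair w -` S) \<partial>\<nu>)"
    by (rule nn_integral_eq_integral[OF integrable_measure_Pair[OF assms]]) auto
  finally show ?thesis
    by (simp add: measure_def)
qed

lemma (in prob_space) prob_indep_var_pair_eq_integral:
  fixes W Z :: "'a \<Rightarrow> real"
  assumes ind: "indep_var borel W borel Z" and S: "S \<in> sets (borel \<Otimes>\<^sub>M borel)"
  shows "integrable (distr M borel W) (\<lambda>w. measure (distr M borel Z) (Pair w -` S))"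
    and "prob {x\<in>space M. (W x, Z x) \<in> S} = (\<integral>w. measure (distr M borel Z) (Pair w -` S) \<partial>distr M borel W)"
proof -
  have W: "random_variable borel W" and Z: "random_variable borel Z"
    using ind by (auto dest: indep_var_rv1 indep_var_rv2)
  then have laws: "prob_space (distr M borel W)" "prob_space (distr M borel Z)"
    by (auto intro: prob_space_distr)
  have S': "S \<in> sets (distr M borel W \<Otimes>\<^sub>M distr M borel Z)"
    using S by (simp add: sets_pair_measure_cong[OF sets_distr sets_distr])
  show "integrable (distr M borel W) (\<lambda>w. measure (distr M borel Z) (Pair w -` S))"
    by (rule integrable_measure_Pair[OF laws S'])
  have "(\<lambda>x. (W x, Z x)) \<in> measurable M (borel \<Otimes>\<^sub>M borel)"
    using W Z by measurable
  then have "prob {x\<in>space M. (W x, Z x) \<in> S} = measure (distr M (borel \<Otimes>\<^sub>M borel) (\<lambda>x. (W x, Z x))) S"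
    using S by (subst measure_distr) (auto intro!: arg_cong[where f=prob])
  also have "\<dots> = measure (distr M borel W \<Otimes>\<^sub>M distr M borel Z) S"
    using ind unfolding indep_var_distribution_eq by simp
  also have "\<dots> = (\<integral>w. measure (distr M borel Z) (Pair w -` S) \<partial>distr M borel W)"
    by (rule measure_pair_measure_eq_integral[OF laws S'])
  finally show "prob {x\<in>space M. (W x, Z x) \<in> S} = (\<integral>w. measure (distr M borel Z) (Pair w -` S) \<partial>distr M borel W)" .
qed

text \<open>Conditioning on the independent variable W, the events at hand become translates of the
  same event for Z.\<close>

lemma (in prob_space) shift_tv_le_max_indep:
  fixes Z W :: "'a \<Rightarrow> real"
  assumes ind: "indep_var borel W borel Z" and law: "distr M borel Z = \<rho>"
    and tv: "shift_tv_le \<rho> t e" and A: "A \<in> sets borel"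
  shows "\<bar>prob {x\<in>space M. max (Z x + c + t) (W x) \<in> A} - prob {x\<in>space M. max (Z x + c) (W x) \<in> A}\<bar> \<le> e"
proof -
  let ?\<nu> = "distr M borel W"
  interpret \<nu>: prob_space ?\<nu>
    using ind by (auto intro: prob_space_distr dest: indep_var_rv1)
  define S where "S d = {p :: real \<times> real. max (snd p + c + d) (fst p) \<in> A}" for d
  have "(\<lambda>p::real \<times> real. max (snd p + c + d) (fst p)) \<in> borel_measurable (borel \<Otimes>\<^sub>M borel)" for d
    by measurable
  from measurable_sets[OF this A] have S: "S d \<in> sets (borel \<Otimes>\<^sub>M borel)" for d
    by (simp add: S_def space_pair_measure vimage_def)
  note int = prob_indep_var_pair_eq_integral(1)[OF ind S, unfolded law]
  have prob_eq: "prob {x\<in>space M. max (Z x + c + d) (W x) \<in> A} = (\<integral>w. measure \<rho> (Pair w -` S d) \<partial>?\<nu>)" for d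
    using prob_indep_var_pair_eq_integral(2)[OF ind S, of d] unfolding law by (simp add: S_def)
  have pointwise: "\<bar>measure \<rho> (Pair w -` S t) - measure \<rho> (Pair w -` S 0)\<bar> \<le> e" for w
  proof -
    have "(\<lambda>z. max (z + c) w) \<in> borel_measurable borel"
      by measurable
    from measurable_sets[OF this A] have "{z. max (z + c) w \<in> A} \<in> sets borel"
      by (simp add: vimage_def)
    moreover have "Pair w -` S t = (\<lambda>z. z + t) -` {z. max (z + c) w \<in> A}" "Pair w -` S 0 = {z. max (z + c) w \<in> A}"
      unfolding S_def by (auto simp: ac_simps)
    ultimately show ?thesis
      using tv unfolding shift_tv_le_def by auto
  qed
  have "\<bar>(\<integral>w. measure \<rho> (Pair w -` S t) \<partial>?\<nu>) - (\<integral>w. measure \<rho> (Pair w -` S 0) \<partial>?\<nu>)\<bar>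
      = \<bar>\<integral>w. measure \<rho> (Pair w -` S t) - measure \<rho> (Pair w -` S 0) \<partial>?\<nu>\<bar>"
    using int by simp
  also have "\<dots> \<le> (\<integral>w. \<bar>measure \<rho> (Pair w -` S t) - measure \<rho> (Pair w -` S 0)\<bar> \<partial>?\<nu>)"
    by (rule integral_abs_bound)
  also have "\<dots> \<le> (\<integral>w. e \<partial>?\<nu>)"
    using int pointwise by (intro integral_mono) auto
  also have "\<dots> = e"
    using \<nu>.prob_space by simp
  finally show ?thesis
    using prob_eq[of t] prob_eq[of 0] by simp
qed

lemma (in prob_space) shift_tv_le_Max_translate_coordinate:
  fixes Z :: "'i \<Rightarrow> 'a \<Rightarrow> real"
  assumes ind: "indep_vars (\<lambda>_. borel) Z I" and I: "finite I" and j: "j \<in> I"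
    and law: "distr M borel (Z j) = \<rho>" and tv: "shift_tv_le \<rho> t e" and A: "A \<in> sets borel"
  shows "\<bar>prob {x\<in>space M. Max ((\<lambda>i. Z i x + s i + (if i = j then t else 0)) ` I) \<in> A}
          - prob {x\<in>space M. Max ((\<lambda>i. Z i x + s i) ` I) \<in> A}\<bar> \<le> e"
proof (cases "I = {j}")
  case True
  have Zj: "random_variable borel (Z j)"
    using ind j unfolding indep_vars_def by auto
  define B where "B = {z. z + s j \<in> A}"
  have B: "B \<in> sets borel"
    using measurable_sets[OF _ A, of "\<lambda>z. z + s j" borel] by (simp add: B_def vimage_def)
  have "prob {x\<in>space M. Z j x + s j + d \<in> A} = measure \<rho> ((\<lambda>z. z + d) -` B)" for d
  proof -
    have "prob {x\<in>space M. Z j x + s j + d \<in> A} = prob (Z j -` ((\<lambda>z. z + d) -` B) \<inter> space M)"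
      by (auto simp: B_def ac_simps intro!: arg_cong[where f=prob])
    also have "\<dots> = measure \<rho> ((\<lambda>z. z + d) -` B)"
      unfolding law[symmetric] using measurable_sets[OF _ B, of "\<lambda>z. z + d" borel] Zj
      by (subst measure_distr) auto
    finally show ?thesis .
  qed
  from this[of t] this[of 0] show ?thesis
    using tv B unfolding True shift_tv_le_def by simp
next
  case False
  define K where "K = I - {j}"
  have I_eq: "I = insert j K" and "j \<notin> K" "finite K" "K \<noteq> {}"
    using I j False by (auto simp: K_def)
  define W where "W x = Max ((\<lambda>i. Z i x + s i) ` K)" for x
  have Max_split: "Max ((\<lambda>i. Z i x + s i + (if i = j then d else 0)) ` I) = max (Z j x + s j + d) (W x)" for x d
  proof -
    have "(\<lambda>i. Z i x + s i + (if i = j then d else 0)) ` K = (\<lambda>i. Z i x + s i) ` K"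
      using \<open>j \<notin> K\<close> by auto
    then show ?thesis
      unfolding I_eq W_def using \<open>finite K\<close> \<open>K \<noteq> {}\<close> by (simp add: Max_insert)
  qed
  have "indep_var (Pi\<^sub>M K (\<lambda>_. borel)) (\<lambda>x. restrict (\<lambda>i. Z i x) K) (Pi\<^sub>M {j} (\<lambda>_. borel)) (\<lambda>x. restrict (\<lambda>i. Z i x) {j})"
    by (rule indep_var_restrict[OF ind]) (use j in \<open>auto simp: K_def\<close>)
  then have "indep_var borel ((\<lambda>f. Max ((\<lambda>i. f i + s i) ` K)) \<circ> (\<lambda>x. restrict (\<lambda>i. Z i x) K))
                       borel ((\<lambda>f. f j) \<circ> (\<lambda>x. restrict (\<lambda>i. Z i x) {j}))"
    by (rule indep_var_compose) (use \<open>finite K\<close> in measurable)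
  moreover have "(\<lambda>f. Max ((\<lambda>i. f i + s i) ` K)) \<circ> (\<lambda>x. restrict (\<lambda>i. Z i x) K) = W"
    unfolding W_def by (auto intro!: ext arg_cong[where f=Max] image_cong)
  ultimately have "indep_var borel W borel (Z j)"
    by (simp add: comp_def)
  from shift_tv_le_max_indep[OF this law tv A, of "s j"] show ?thesis
    using Max_split[of _ t] Max_split[of _ 0] by simp
qed

text \<open>Hybrid argument: translate the coordinates one at a time.\<close>

lemma (in prob_space) shift_tv_le_distr_Max_indep:
  fixes Z :: "'i \<Rightarrow> 'a \<Rightarrow> real"
  assumes ind: "indep_vars (\<lambda>_. borel) Z I" and I: "finite I" "I \<noteq> {}"
    and law: "\<And>i. i \<in> I \<Longrightarrow> distr M borel (Z i) = \<rho>" and tv: "shift_tv_le \<rho> t e"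
  shows "shift_tv_le (distr M borel (\<lambda>x. Max ((\<lambda>i. Z i x) ` I))) t (real (card I) * e)"
  unfolding shift_tv_le_def
proof
  fix A :: "real set" assume A: "A \<in> sets borel"
  have "\<bar>prob {x\<in>space M. Max ((\<lambda>i. Z i x + (if i \<in> S then t else 0)) ` I) \<in> A}
          - prob {x\<in>space M. Max ((\<lambda>i. Z i x) ` I) \<in> A}\<bar> \<le> real (card S) * e" if "S \<subseteq> I" for S
    using finite_subset[OF that I(1)] that
  proof (induction S rule: finite_induct)
    case empty
    then show ?case by simp
  next
    case (insert j S)
    have eq: "(\<lambda>i. Z i x + (if i \<in> insert j S then t else 0))
        = (\<lambda>i. Z i x + (if i \<in> S then t else 0) + (if i = j then t else 0))" for x
      using insert(2) by auto
    have "\<bar>prob {x\<in>space M. Max ((\<lambda>i. Z i x + (if i \<in> insert j S then t else 0)) ` I) \<in> A}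
          - prob {x\<in>space M. Max ((\<lambda>i. Z i x + (if i \<in> S then t else 0)) ` I) \<in> A}\<bar> \<le> e"
      unfolding eq using insert(4) by (intro shift_tv_le_Max_translate_coordinate[OF ind I(1) _ law tv A]) auto
    with insert show ?case
      by (simp add: algebra_simps abs_le_iff)
  qed
  from this[OF order_refl]
  have "\<bar>prob {x\<in>space M. Max ((\<lambda>i. Z i x) ` I) + t \<in> A} - prob {x\<in>space M. Max ((\<lambda>i. Z i x) ` I) \<in> A}\<bar>
      \<le> real (card I) * e"
    using mono_Max_commute[of "\<lambda>y. y + t" "(\<lambda>i. Z i _) ` I"] I by (simp add: mono_def image_image)
  moreover have "random_variable borel (\<lambda>x. Max ((\<lambda>i. Z i x) ` I))"
    using ind I unfolding indep_vars_def by (intro borel_measurable_Max) auto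
  moreover have "(\<lambda>x. x + t) -` A \<in> sets borel"
    using measurable_sets[OF _ A, of "\<lambda>x. x + t" borel] by simp
  ultimately show "\<bar>measure (distr M borel (\<lambda>x. Max ((\<lambda>i. Z i x) ` I))) ((\<lambda>x. x + t) -` A)
      - measure (distr M borel (\<lambda>x. Max ((\<lambda>i. Z i x) ` I))) A\<bar> \<le> real (card I) * e"
    using A by (simp add: measure_distr vimage_def Int_def conj_commute)
qed

section \<open>Equidistribution modulo 1\<close>

lemma borel_measurable_frac [measurable]: "(frac :: real \<Rightarrow> real) \<in> borel_measurable borel"
proof -
  have "(\<lambda>x::real. x - real_of_int \<lfloor>x\<rfloor>) \<in> borel_measurable borel"
    by measurable
  moreover have "frac = (\<lambda>x::real. x - real_of_int \<lfloor>x\<rfloor>)"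
    by (auto simp: frac_def)
  ultimately show ?thesis
    by simp
qed

lemma frac_add_eq_if:
  fixes y t :: real
  assumes "0 \<le> y" "y < 1" "0 \<le> t" "t \<le> 1"
  shows "frac (y + t) = (if t < 1 - y then y + t else y + t - 1)"
  using frac_1_eq[of "y + t - 1"] assms by (auto intro: frac_eq_id)

lemma emeasure_frac_translate_le:
  fixes x \<delta> :: real
  assumes "0 \<le> \<delta>" "\<delta> \<le> 1"
  shows "emeasure lborel {t\<in>{0..1}. frac (x + t) \<le> \<delta>} = ennreal \<delta>"
proof -
  define y where "y = frac x"
  have y: "0 \<le> y" "y < 1"
    by (auto simp: y_def frac_lt_1)
  have frac_eq: "frac (x + t) = (if t < 1 - y then y + t else y + t - 1)" if "0 \<le> t" "t \<le> 1" for t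
    using frac_add_eq_if[OF y that] by (simp add: y_def)
  define S1 where "S1 = {t. 0 \<le> t \<and> t < 1 - y \<and> t \<le> \<delta> - y}"
  define S2 where "S2 = {t. 1 - y \<le> t \<and> t \<le> 1 \<and> t \<le> 1 + \<delta> - y}"
  have "{t\<in>{0..1}. frac (x + t) \<le> \<delta>} = S1 \<union> S2"
    using y by (auto simp: frac_eq S1_def S2_def split: if_splits)
  moreover have "emeasure lborel (S1 \<union> S2) = emeasure lborel S1 + emeasure lborel S2"
    by (rule plus_emeasure[symmetric]) (auto simp: S1_def S2_def)
  moreover have "emeasure lborel S1 + emeasure lborel S2 = ennreal \<delta>"
  proof (cases "y \<le> \<delta>")
    case True
    have S2: "S2 = {1 - y..1}"
      using True by (auto simp: S2_def)
    show ?thesis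
    proof (cases "\<delta> < 1")
      case True
      then have "S1 = {0..\<delta> - y}"
        using \<open>y \<le> \<delta>\<close> y by (auto simp: S1_def)
      then show ?thesis
        using \<open>y \<le> \<delta>\<close> y S2 by (simp add: ennreal_plus[symmetric] del: ennreal_plus)
    next
      case False
      then have "\<delta> = 1" "S1 = {0..<1 - y}"
        using assms by (auto simp: S1_def)
      then show ?thesis
        using y S2 by (simp add: ennreal_plus[symmetric] del: ennreal_plus)
    qed
  next
    case False
    then have "S1 = {}" "S2 = {1 - y..1 + \<delta> - y}"
      using assms by (auto simp: S1_def S2_def)
    then show ?thesis
      using False assms by simp
  qed
  ultimately show ?thesis
    by simp
qed

text \<open>Fubini: averaged over the translations t \<in> [0, 1], every law gives the event
  frac x \<le> \<delta> probability \<delta>.\<close>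

lemma nn_integral_emeasure_translate_frac_le:
  fixes \<gamma> :: "real measure"
  assumes \<gamma>: "prob_space \<gamma>" "sets \<gamma> = sets borel" and "0 \<le> \<delta>" "\<delta> \<le> 1"
  shows "(\<integral>\<^sup>+t. indicator {0..1} t * emeasure \<gamma> ((\<lambda>x. x + t) -` {x. frac x \<le> \<delta>}) \<partial>lborel) = ennreal \<delta>"
proof -
  interpret \<gamma>: prob_space \<gamma> by fact
  interpret pair_sigma_finite lborel \<gamma>
    unfolding pair_sigma_finite_def using lborel.sigma_finite_measure_axioms \<gamma>.sigma_finite_measure by auto
  let ?F = "\<lambda>t x. indicator {0..1} t * indicator {x. frac x \<le> \<delta>} (x + t) :: ennreal"
  have "(\<lambda>(t, x). ?F t x) \<in> borel_measurable (borel \<Otimes>\<^sub>M borel)"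
    by measurable
  then have F: "(\<lambda>(t, x). ?F t x) \<in> borel_measurable (lborel \<Otimes>\<^sub>M \<gamma>)"
    by (simp add: measurable_cong_sets[OF sets_pair_measure_cong[OF sets_lborel \<gamma>(2)] refl])
  have "indicator {0..1} t * emeasure \<gamma> ((\<lambda>x. x + t) -` {x. frac x \<le> \<delta>}) = (\<integral>\<^sup>+x. ?F t x \<partial>\<gamma>)" for t
  proof -
    have "(\<lambda>x. x + t) -` {x. frac x \<le> \<delta>} \<in> sets \<gamma>"
      using \<gamma>(2) by simp measurable
    moreover have "(\<integral>\<^sup>+x. ?F t x \<partial>\<gamma>) = indicator {0..1} t * (\<integral>\<^sup>+x. indicator ((\<lambda>x. x + t) -` {x. frac x \<le> \<delta>}) x \<partial>\<gamma>)"
      by (subst nn_integral_cmult[symmetric])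
        (auto intro!: nn_integral_cong simp: indicator_def measurable_cong_sets[OF \<gamma>(2) refl])
    ultimately show ?thesis
      by simp
  qed
  then have "(\<integral>\<^sup>+t. indicator {0..1} t * emeasure \<gamma> ((\<lambda>x. x + t) -` {x. frac x \<le> \<delta>}) \<partial>lborel)
      = (\<integral>\<^sup>+t. \<integral>\<^sup>+x. ?F t x \<partial>\<gamma> \<partial>lborel)"
    by simp
  also have "\<dots> = (\<integral>\<^sup>+x. \<integral>\<^sup>+t. ?F t x \<partial>lborel \<partial>\<gamma>)"
    using Fubini'[of ?F] F by simp
  also have "\<dots> = (\<integral>\<^sup>+x. ennreal \<delta> \<partial>\<gamma>)"
  proof (intro nn_integral_cong)
    fix x :: real
    have "(\<integral>\<^sup>+t. ?F t x \<partial>lborel) = (\<integral>\<^sup>+t. indicator {t\<in>{0..1}. frac (x + t) \<le> \<delta>} t \<partial>lborel)"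
      by (intro nn_integral_cong) (auto simp: indicator_def)
    also have "\<dots> = emeasure lborel {t\<in>{0..1}. frac (x + t) \<le> \<delta>}"
      by (intro nn_integral_indicator) measurable
    also have "\<dots> = ennreal \<delta>"
      by (rule emeasure_frac_translate_le[OF assms(3,4)])
    finally show "(\<integral>\<^sup>+t. ?F t x \<partial>lborel) = ennreal \<delta>" .
  qed
  also have "\<dots> = ennreal \<delta>"
    by (simp add: \<gamma>.emeasure_space_1)
  finally show ?thesis .
qed

lemma abs_measure_frac_le_diff_le:
  fixes \<gamma> :: "real measure"
  assumes \<gamma>: "prob_space \<gamma>" "sets \<gamma> = sets borel" and \<delta>: "0 \<le> \<delta>" "\<delta> \<le> 1"
    and tv: "\<And>t. t \<in> {0..1} \<Longrightarrow> shift_tv_le \<gamma> t E"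
  shows "\<bar>measure \<gamma> {x. frac x \<le> \<delta>} - \<delta>\<bar> \<le> E"
proof -
  interpret \<gamma>: prob_space \<gamma> by fact
  let ?A = "{x::real. frac x \<le> \<delta>}"
  let ?q = "\<lambda>t. indicator {0..1} t * emeasure \<gamma> ((\<lambda>x. x + t) -` ?A)"
  define p where "p = measure \<gamma> ?A"
  have "?A \<in> sets borel"
    by measurable
  then have E: "\<bar>measure \<gamma> ((\<lambda>x. x + t) -` ?A) - p\<bar> \<le> E" if "t \<in> {0..1}" for t
    using tv[OF that] unfolding shift_tv_le_def p_def by blast
  have "0 \<le> E" "0 \<le> p"
    using shift_tv_le_nonneg[OF tv[of 0]] by (simp_all add: p_def)
  have bounds: "?q t \<le> ennreal (p + E) * indicator {0..1} t"
    "ennreal (p - E) * indicator {0..1} t \<le> ?q t" for t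
    using E[of t] by (cases "t \<in> {0..1}"; simp add: \<gamma>.emeasure_eq_measure abs_le_iff ennreal_leI)+
  have "(\<integral>\<^sup>+t. ?q t \<partial>lborel) \<le> (\<integral>\<^sup>+t. ennreal (p + E) * indicator {0..1::real} t \<partial>lborel)"
    using bounds(1) by (intro nn_integral_mono)
  then have "\<delta> \<le> p + E"
    using nn_integral_emeasure_translate_frac_le[OF \<gamma> \<delta>] \<open>0 \<le> E\<close> \<open>0 \<le> p\<close>
    by (simp add: nn_integral_cmult_indicator ennreal_le_iff del: ennreal_plus)
  moreover have "p - E \<le> \<delta>"
  proof (cases "p - E \<le> 0")
    case False
    have "(\<integral>\<^sup>+t. ennreal (p - E) * indicator {0..1::real} t \<partial>lborel) \<le> (\<integral>\<^sup>+t. ?q t \<partial>lborel)"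
      using bounds(2) by (intro nn_integral_mono)
    then show ?thesis
      using nn_integral_emeasure_translate_frac_le[OF \<gamma> \<delta>] False \<delta>
      by (simp add: nn_integral_cmult_indicator ennreal_le_iff)
  qed (use \<delta> in simp)
  ultimately show ?thesis
    unfolding p_def by (simp add: abs_le_iff)
qed

section \<open>Row sums and significands\<close>

lemma (in prob_space) distr_sum_iid_eq_conv_power:
  fixes X :: "'i \<Rightarrow> 'a \<Rightarrow> real"
  assumes "finite J" and "indep_vars (\<lambda>_. borel) X J" and "\<And>j. j \<in> J \<Longrightarrow> distr M borel (X j) = U"
  shows "distr M borel (\<lambda>x. \<Sum>j\<in>J. X j x) = conv_power U (card J)"
  using assms
proof (induction J rule: finite_induct)
  case empty
  show ?case
    by (simp add: distr_const)
next
  case (insert j J)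
  have rvX: "random_variable borel (X i)" if "i \<in> insert j J" for i
    using insert.prems(1) that unfolding indep_vars_def by auto
  then have rv: "random_variable borel (X j)" "random_variable borel (\<lambda>x. \<Sum>j\<in>J. X j x)"
    by (auto intro!: borel_measurable_sum)
  have "distr M borel (\<lambda>x. \<Sum>j\<in>insert j J. X j x) = distr M borel (\<lambda>x. X j x + (\<Sum>j\<in>J. X j x))"
    using insert.hyps by simp
  also have "\<dots> = (distr M borel (X j) \<star> distr M borel (\<lambda>x. \<Sum>j\<in>J. X j x))"
    by (rule sum_indep_random_variable[OF indep_vars_sum[OF insert.hyps insert.prems(1)] rv])
  also have "\<dots> = (U \<star> conv_power U (card J))"
    using insert.prems indep_vars_subset[OF insert.prems(1)] by (simp add: insert.IH subset_insertI)
  finally show ?case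
    using insert.hyps by simp
qed

lemma (in prob_space) indep_vars_sum_disjoint_blocks:
  fixes X :: "'i \<Rightarrow> 'a \<Rightarrow> real"
  assumes "indep_vars (\<lambda>_. borel) X I" "\<And>l. l \<in> L \<Longrightarrow> K l \<subseteq> I" "disjoint_family_on K L"
  shows "indep_vars (\<lambda>_. borel) (\<lambda>l x. \<Sum>p\<in>K l. X p x) L"
proof -
  have "indep_vars (\<lambda>l. Pi\<^sub>M (K l) (\<lambda>_. borel)) (\<lambda>l x. restrict (\<lambda>p. X p x) (K l)) L"
    by (rule indep_vars_restrict[OF assms])
  then have "indep_vars (\<lambda>_. borel) (\<lambda>l x. (\<lambda>f. \<Sum>p\<in>K l. f p) (restrict (\<lambda>p. X p x) (K l))) L"
    by (rule indep_vars_compose2) measurable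
  then show ?thesis
    by simp
qed

lemma (in prob_space) abs_prob_frac_Max_row_sums_le:
  fixes X :: "'i \<times> nat \<Rightarrow> 'a \<Rightarrow> real"
  assumes ind: "indep_vars (\<lambda>_. borel) X (I \<times> {1..})" and I: "finite I" "I \<noteq> {}"
    and law: "\<And>p. p \<in> I \<times> {1..} \<Longrightarrow> distr M borel (X p) = U"
    and \<delta>: "0 \<le> \<delta>" "\<delta> \<le> 1" and tv: "\<And>t. t \<in> {0..1} \<Longrightarrow> shift_tv_le (conv_power U n) t e"
  shows "\<bar>prob {x\<in>space M. frac (Max ((\<lambda>i. \<Sum>j=1..n. X (i, j) x) ` I)) \<le> \<delta>} - \<delta>\<bar> \<le> real (card I) * e"
proof -
  define Z where "Z i x = (\<Sum>p\<in>Pair i ` {1..n}. X p x)" for i x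
  have Z_eq: "Z i x = (\<Sum>j=1..n. X (i, j) x)" for i x
    unfolding Z_def by (subst sum.reindex) (auto simp: inj_on_def)
  have indZ: "indep_vars (\<lambda>_. borel) Z I"
    unfolding Z_def using ind by (rule indep_vars_sum_disjoint_blocks) (auto simp: disjoint_family_on_def)
  have lawZ: "distr M borel (Z i) = conv_power U n" if "i \<in> I" for i
  proof -
    have "indep_vars (\<lambda>_. borel) X (Pair i ` {1..n})"
      using that by (intro indep_vars_subset[OF ind]) auto
    then show ?thesis
      unfolding Z_def using that law
      by (subst distr_sum_iid_eq_conv_power) (auto simp: card_image inj_on_def)
  qed
  let ?G = "\<lambda>x. Max ((\<lambda>i. Z i x) ` I)"
  have G: "random_variable borel ?G"
    using indZ I unfolding indep_vars_def by (intro borel_measurable_Max) auto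
  have "shift_tv_le (distr M borel ?G) t (real (card I) * e)" if "t \<in> {0..1}" for t
    by (rule shift_tv_le_distr_Max_indep[OF indZ I lawZ tv[OF that]])
  then have "\<bar>measure (distr M borel ?G) {x. frac x \<le> \<delta>} - \<delta>\<bar> \<le> real (card I) * e"
    using G by (intro abs_measure_frac_le_diff_le[OF prob_space_distr _ \<delta>]) auto
  then show ?thesis
    using G by (simp add: measure_distr vimage_def Int_def conj_commute Z_eq)
qed

lemma (in prob_space) frac_Max_row_sums_tendsto:
  fixes X :: "'i \<times> nat \<Rightarrow> 'a \<Rightarrow> real" and a b \<delta> :: real
  assumes ind: "indep_vars (\<lambda>_. borel) X (I \<times> {1..})" and I: "finite I" "I \<noteq> {}"
    and law: "\<And>p. p \<in> I \<times> {1..} \<Longrightarrow> distr M borel (X p) = uniform_measure lborel {a<..<b}"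
    and "a < b" and \<delta>: "0 \<le> \<delta>" "\<delta> \<le> 1"
  shows "(\<lambda>n. prob {x\<in>space M. frac (Max ((\<lambda>i. \<Sum>j=1..n. X (i, j) x) ` I)) \<le> \<delta>}) \<longlonglongrightarrow> \<delta>"
proof (rule LIMSEQ_I)
  fix r :: real assume "0 < r"
  then have "0 < r / 2 / card I"
    using I by (simp add: card_gt_0_iff)
  from eventually_shift_tv_le_conv_power_uniform[OF \<open>a < b\<close> this]
  obtain N where "\<And>n t. N \<le> n \<Longrightarrow> t \<in> {0..1} \<Longrightarrow>
      shift_tv_le (conv_power (uniform_measure lborel {a<..<b}) n) t (r / 2 / card I)"
    unfolding eventually_sequentially by blast
  from abs_prob_frac_Max_row_sums_le[OF ind I law \<delta> this]
  have "\<bar>prob {x\<in>space M. frac (Max ((\<lambda>i. \<Sum>j=1..n. X (i, j) x) ` I)) \<le> \<delta>} - \<delta>\<bar> \<le> r / 2"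
    if "N \<le> n" for n
    using that I by (simp add: card_gt_0_iff)
  then show "\<exists>n0. \<forall>n\<ge>n0. norm (prob {x\<in>space M. frac (Max ((\<lambda>i. \<Sum>j=1..n. X (i, j) x) ` I)) \<le> \<delta>} - \<delta>) < r"
    using \<open>0 < r\<close> by (intro exI[of _ N]) force
qed

lemma significand_eq_powr_frac:
  fixes B y :: real
  assumes "1 < B"
  shows "significand B y = B powr frac (log B y)"
  unfolding significand_def
proof (rule the_equality)
  let ?L = "log B y"
  have "B powr frac ?L < B powr 1"
    using assms frac_lt_1[of ?L] by (intro powr_less_mono) auto
  moreover have "?L - log B (B powr frac ?L) = of_int \<lfloor>?L\<rfloor>"
    using assms by (simp add: frac_def)
  ultimately show "1 \<le> B powr frac ?L \<and> B powr frac ?L < B \<and> ?L - log B (B powr frac ?L) \<in> \<int>"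
    using assms by (auto intro: ge_one_powr_ge_zero)
next
  fix s assume s: "1 \<le> s \<and> s < B \<and> log B y - log B s \<in> \<int>"
  then have "0 \<le> log B s" "log B s < 1"
    using assms by auto
  then have "frac (log B y) = log B s"
    using s by (simp add: frac_unique_iff)
  then show "s = B powr frac (log B y)"
    using assms s by simp
qed

lemma significand_le_iff_frac_log_le:
  fixes B y D :: real
  assumes "1 < B" "1 \<le> D"
  shows "significand B y \<le> D \<longleftrightarrow> frac (log B y) \<le> log B D"
  unfolding significand_eq_powr_frac[OF assms(1)] using le_log_iff[OF assms(1), of D] assms(2) by simp

lemma log_Max_image:
  fixes B :: real and f :: "'i \<Rightarrow> real"
  assumes "1 < B" "finite I" "I \<noteq> {}" "\<And>i. i \<in> I \<Longrightarrow> 0 < f i"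
  shows "log B (Max (f ` I)) = Max ((\<lambda>i. log B (f i)) ` I)"
proof -
  have "Max (f ` I) \<in> f ` I"
    using assms(2,3) by (intro Max_in) auto
  then obtain i0 where i0: "i0 \<in> I" "Max (f ` I) = f i0"
    by blast
  have "f i \<le> f i0" if "i \<in> I" for i
    using i0 that assms(2) by (metis Max_ge finite_imageI image_eqI)
  then show ?thesis
    unfolding i0(2) using assms i0(1) by (intro Max_eqI[symmetric]) auto
qed

lemma log_prod:
  fixes B :: real and f :: "'j \<Rightarrow> real"
  assumes "1 < B" "finite J" "\<And>j. j \<in> J \<Longrightarrow> 0 < f j"
  shows "log B (\<Prod>j\<in>J. f j) = (\<Sum>j\<in>J. log B (f j))"
proof -
  have "ln (\<Prod>j\<in>J. f j) = (\<Sum>j\<in>J. ln (f j))"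
    by (rule ln_prod[OF assms(2)]) (use assms(3) in force)
  then show ?thesis
    unfolding log_def by (simp add: sum_divide_distrib)
qed

lemma (in prob_space) prob_significand_Max_prod_le:
  fixes P :: "'i \<Rightarrow> 'j \<Rightarrow> 'a \<Rightarrow> real"
  assumes "1 < B" "1 \<le> D" and I: "finite I" "I \<noteq> {}" and "finite J"
    and rv: "\<And>i j. i \<in> I \<Longrightarrow> j \<in> J \<Longrightarrow> random_variable borel (P i j)"
    and pos: "\<And>i j. i \<in> I \<Longrightarrow> j \<in> J \<Longrightarrow> AE x in M. 0 < P i j x"
  shows "prob {x\<in>space M. significand B (Max ((\<lambda>i. \<Prod>j\<in>J. P i j x) ` I)) \<le> D}
       = prob {x\<in>space M. frac (Max ((\<lambda>i. \<Sum>j\<in>J. log B (P i j x)) ` I)) \<le> log B D}"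
proof -
  have [measurable]: "random_variable borel (\<lambda>x. Max ((\<lambda>i. \<Prod>j\<in>J. P i j x) ` I))"
    "random_variable borel (\<lambda>x. Max ((\<lambda>i. \<Sum>j\<in>J. log B (P i j x)) ` I))"
    using I(1) \<open>finite J\<close> rv by (intro borel_measurable_Max borel_measurable_prod borel_measurable_sum
      borel_measurable_log; simp)+
  have events_prod: "{x\<in>space M. frac (log B (Max ((\<lambda>i. \<Prod>j\<in>J. P i j x) ` I))) \<le> log B D} \<in> events"
    by measurable
  have events_sum: "{x\<in>space M. frac (Max ((\<lambda>i. \<Sum>j\<in>J. log B (P i j x)) ` I)) \<le> log B D} \<in> events"
    by measurable
  have "{x\<in>space M. significand B (Max ((\<lambda>i. \<Prod>j\<in>J. P i j x) ` I)) \<le> D}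
      = {x\<in>space M. frac (log B (Max ((\<lambda>i. \<Prod>j\<in>J. P i j x) ` I))) \<le> log B D}"
    using significand_le_iff_frac_log_le[OF assms(1,2)] by simp
  also have "prob \<dots> = prob {x\<in>space M. frac (Max ((\<lambda>i. \<Sum>j\<in>J. log B (P i j x)) ` I)) \<le> log B D}"
  proof (rule measure_eq_AE)
    have "AE x in M. \<forall>p\<in>I \<times> J. 0 < P (fst p) (snd p) x"
      using I \<open>finite J\<close> pos by (intro AE_finite_allI) auto
    then show "AE x in M. x \<in> {x\<in>space M. frac (log B (Max ((\<lambda>i. \<Prod>j\<in>J. P i j x) ` I))) \<le> log B D}
        \<longleftrightarrow> x \<in> {x\<in>space M. frac (Max ((\<lambda>i. \<Sum>j\<in>J. log B (P i j x)) ` I)) \<le> log B D}"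
    proof (rule AE_mp, intro AE_I2 impI)
      fix x assume pos_x: "\<forall>p\<in>I \<times> J. 0 < P (fst p) (snd p) x"
      have "log B (Max ((\<lambda>i. \<Prod>j\<in>J. P i j x) ` I)) = Max ((\<lambda>i. log B (\<Prod>j\<in>J. P i j x)) ` I)"
        using pos_x assms(1) I by (intro log_Max_image) (auto intro!: prod_pos)
      also have "\<dots> = Max ((\<lambda>i. \<Sum>j\<in>J. log B (P i j x)) ` I)"
        using pos_x assms(1) \<open>finite J\<close> by (intro arg_cong[where f=Max] image_cong refl log_prod) auto
      finally show "x \<in> {x\<in>space M. frac (log B (Max ((\<lambda>i. \<Prod>j\<in>J. P i j x) ` I))) \<le> log B D}
          \<longleftrightarrow> x \<in> {x\<in>space M. frac (Max ((\<lambda>i. \<Sum>j\<in>J. log B (P i j x)) ` I)) \<le> log B D}"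
        by simp
    qed
  qed (fact events_prod events_sum)+
  finally show ?thesis .
qed

theorem theorem1p9:
  fixes M :: "'a measure" and B a b :: real and m :: nat
    and P :: "nat \<Rightarrow> nat \<Rightarrow> 'a \<Rightarrow> real"
  assumes "prob_space M"
    and "B > 1" and "m \<ge> 1" and "a < b" and "b \<le> 0"
    and "prob_space.indep_vars M (\<lambda>_. borel) (\<lambda>(i, j). P i j) ({1..m} \<times> {1..})"
    and "\<And>i j. i \<in> {1..m} \<Longrightarrow> j \<ge> 1 \<Longrightarrow> AE x in M. P i j x > 0"
    and "\<And>i j. i \<in> {1..m} \<Longrightarrow> j \<ge> 1 \<Longrightarrow>
           distr M lborel (\<lambda>x. log B (P i j x)) = uniform_measure lborel {a<..<b}"
  shows "strong_benford M B (\<lambda>n x. Max ((\<lambda>i. \<Prod>j=1..n. P i j x) ` {1..m}))"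
proof -
  interpret prob_space M by fact
  define X where "X p x = log B ((\<lambda>(i, j). P i j) p x)" for p x
  have rv: "random_variable borel (P i j)" if "i \<in> {1..m}" "1 \<le> j" for i j
    using assms(6) that unfolding indep_vars_def by auto
  have indX: "indep_vars (\<lambda>_. borel) X ({1..m} \<times> {1..})"
    unfolding X_def using assms(6) by (rule indep_vars_compose2) measurable
  have lawX: "distr M borel (X p) = uniform_measure lborel {a<..<b}" if "p \<in> {1..m} \<times> {1..}" for p
    using that assms(8) rv by (auto simp: X_def cong: distr_cong)
  show ?thesis
    unfolding strong_benford_def
  proof
    fix D assume D: "D \<in> {1..B}"
    have "(\<lambda>n. prob {x\<in>space M. frac (Max ((\<lambda>i. \<Sum>j=1..n. X (i, j) x) ` {1..m})) \<le> log B D}) \<longlonglongrightarrow> log B D"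
      using D assms(2,3) by (intro frac_Max_row_sums_tendsto[OF indX _ _ lawX assms(4)]) auto
    moreover have "prob {x\<in>space M. significand B (Max ((\<lambda>i. \<Prod>j=1..n. P i j x) ` {1..m})) \<le> D}
        = prob {x\<in>space M. frac (Max ((\<lambda>i. \<Sum>j=1..n. X (i, j) x) ` {1..m})) \<le> log B D}" for n
      unfolding X_def using D assms(2,3,7) rv by (subst prob_significand_Max_prod_le) auto
    ultimately show "(\<lambda>n. prob {x\<in>space M. significand B (Max ((\<lambda>i. \<Prod>j=1..n. P i j x) ` {1..m})) \<le> D}) \<longlonglongrightarrow> log B D"
      by simp
  qed
qed

end
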